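(* Let $\varepsilon>0$ and $n\in\mathbb{N}$. Then $$\mu_n\left(\left\{r\in Q_n:\sum_{k=0}^{n-1}p(r)_k\ge n\left(\tfrac12+\varepsilon\right)\right\}\right)\le e^{-2\varepsilon^2n}$$ and $$\mu_n\left(\left\{r\in Q_n:\sum_{k=0}^{n-1}p(r)_k\le n\left(\tfrac12-\varepsilon\right)\right\}\right)\le e^{-2\varepsilon^2n},$$ where the $p(r)_k\in\mathbb{F}_2$ are summed as integers $0$ or $1$.
   Context: $\mathbb{F}_2((x^{-1}))$ is the field of formal series $r=\sum_{z\in\mathbb{Z}}a_zx^z$, $a_z\in\mathbb{F}_2$, with $a_z\ne0$ for only finitely many positive $z$; $\deg(r)=\max\{z:a_z\ne0\}$. The polynomial part is $[r]=\sum_{z\ge0}a_zx^z$. $S(r)=\frac{r}{x+1}$ if $[r](1)=0$ and $S(r)=\frac{xr}{x+1}$ if $[r](1)=1$; $p(r)_k=[S^k(r)](1)$. $Q_n=\{r:\deg(r)=n\}$ and $\mu_n$ is the probability measure on $Q_n$ under which the coefficients $a_{n-1},a_{n-2},\dots$ are independent and uniform in $\mathbb{F}_2$. *)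

theory Defs
  imports "HOL-Probability.Probability" "HOL-Library.Z2"
    "HOL-Computational_Algebra.Formal_Laurent_Series"
begin

text \<open>F_2((x^-1)) is modelled as the library type of formal Laurent series
  bit fls in the variable y = x^-1 (finitely many negative powers of y
  = finitely many positive powers of x).\<close>

definition xvar :: "bit fls" where
  "xvar = fls_X_inv"

definition deg :: "bit fls \<Rightarrow> int" where
  "deg r = - fls_subdegree r"

text \<open>Polynomial part [r] = sum over z >= 0 of a_z x^z, as a polynomial in x:
  coefficient of x^z is r $$ (-z).\<close>
definition polypart :: "bit fls \<Rightarrow> bit poly" where
  "polypart r = fls_prpart r + [: fls_nth r 0 :]"

definition Smap :: "bit fls \<Rightarrow> bit fls" where
  "Smap r = (if poly (polypart r) 1 = 0 then r / (xvar + 1) else xvar * r / (xvar + 1))"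

definition pseq :: "bit fls \<Rightarrow> nat \<Rightarrow> bit" where
  "pseq r k = poly (polypart ((Smap ^^ k) r)) 1"

definition Q :: "nat \<Rightarrow> bit fls set" where
  "Q n = {r. r \<noteq> 0 \<and> deg r = int n}"

text \<open>Coin space: i.i.d. uniform coefficients a_{n-1}, a_{n-2}, ... ;
  omega i is the coefficient a_{n-1-i}.\<close>
definition coin_space :: "(nat \<Rightarrow> bit) measure" where
  "coin_space = PiM UNIV (\<lambda>_. measure_pmf (pmf_of_set {0, 1}))"

definition series_of :: "nat \<Rightarrow> (nat \<Rightarrow> bit) \<Rightarrow> bit fls" where
  "series_of n \<omega> =
     fls_shift (int n) (fps_to_fls (Abs_fps (\<lambda>i. if i = 0 then 1 else \<omega> (i - 1))))"

definition mu_event :: "nat \<Rightarrow> bit fls set \<Rightarrow> (nat \<Rightarrow> bit) set" where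
  "mu_event n A = {\<omega> \<in> space coin_space. series_of n \<omega> \<in> A}"

definition psum :: "bit fls \<Rightarrow> nat \<Rightarrow> nat" where
  "psum r n = (\<Sum>k<n. if pseq r k = 1 then 1 else 0)"

end

theory Submission
  imports Defs
begin

text \<open>Write \<open>y = x\<^sup>-\<^sup>1\<close>. A series of degree \<open>n\<close> is \<open>y\<^sup>-\<^sup>n A(y)\<close> with \<open>A\<close> a power
  series, \<open>A(0) = 1\<close>, and its polynomial part evaluated at 1 is a partial coefficient sum of \<open>A\<close>.
  Since \<open>x + 1 = y\<^sup>-\<^sup>1 (1 + y)\<close>, the map \<open>S\<close> replaces \<open>A\<close> by \<open>A / (1 + y)\<close>, whose coefficients
  are the partial sums of those of \<open>A\<close>, and lowers the exponent by 0 or 1.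
  Hence \<open>p\<^sub>0, \<dots>, p\<^sub>n\<^sub>-\<^sub>1\<close> depend only on the random digits \<open>a\<^sub>n\<^sub>-\<^sub>1, \<dots>, a\<^sub>0\<close>, and a
  partial-summation argument shows that they also determine them. So the digit map is a
  bijection of \<open>F\<^sub>2\<^sup>n\<close>, the sum \<open>p\<^sub>0 + \<dots> + p\<^sub>n\<^sub>-\<^sub>1\<close> is binomially distributed with
  parameters \<open>n\<close> and \<open>1/2\<close>, and Hoeffding's inequality gives the bounds.\<close>

unbundle fps_syntax
no_notation vec_nth (infixl \<open>$\<close> 90)

lemma fps_mult_nth_cong_prefix:
  assumes "\<And>j. j \<le> m \<Longrightarrow> A $ j = A' $ j" "i \<le> m"
  shows "(A * C) $ i = (A' * C) $ i"
proof -
  have "fps_cutoff (Suc m) A = fps_cutoff (Suc m) A'"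
    using assms(1) by (intro fps_ext) simp
  then show ?thesis
    using assms(2) by (metis fps_cutoff_left_mult_nth le_imp_less_Suc)
qed

definition fps_geo :: "'a::semiring_1 fps" where
  "fps_geo = Abs_fps (\<lambda>_. 1)"

lemma fps_geo_mult_nth: "(B * fps_geo) $ i = (\<Sum>j\<le>i. B $ j)"
  by (simp add: fps_mult_nth fps_geo_def atLeast0AtMost)

lemma fps_geo_times_one_plus_X: "fps_geo * (1 + fps_X) = (1 :: bit fps)"
  by (rule fps_ext) (simp add: fps_mult_right_fps_X_plus_1_nth fps_geo_def)

lemma poly_one_eq_sum_coeffs:
  fixes p :: "'a::comm_semiring_1 poly"
  assumes "degree p \<le> m"
  shows "poly p 1 = (\<Sum>z\<le>m. coeff p z)"
proof -
  have "poly p 1 = (\<Sum>z\<le>degree p. coeff p z)"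
    by (simp add: poly_altdef)
  also have "\<dots> = (\<Sum>z\<le>m. coeff p z)"
    by (rule sum.mono_neutral_left) (use assms in \<open>auto simp: coeff_eq_0\<close>)
  finally show ?thesis .
qed

definition partial_sum :: "bit fps \<Rightarrow> int \<Rightarrow> bit" where
  "partial_sum B N = (if N < 0 then 0 else (\<Sum>j\<le>nat N. B $ j))"

lemma partial_sum_of_nat: "partial_sum B (int m) = (\<Sum>j\<le>m. B $ j)"
  by (simp add: partial_sum_def)

lemma coeff_polypart: "coeff (polypart r) z = r $$ (- int z)"
  by (simp add: polypart_def coeff_pCons' split: nat.split)

lemma poly_polypart_shift_one:
  "poly (polypart (fls_shift N (fps_to_fls B))) 1 = partial_sum B N"
proof (cases "N < 0")
  case True
  have "polypart (fls_shift N (fps_to_fls B)) = 0"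
    by (rule poly_eqI) (use True in \<open>simp add: coeff_polypart\<close>)
  then show ?thesis using True by (simp add: partial_sum_def)
next
  case False
  let ?p = "polypart (fls_shift N (fps_to_fls B))"
  have coeff_p: "coeff ?p z = (if z \<le> nat N then B $ (nat N - z) else 0)" for z
    using False by (auto simp: coeff_polypart nat_diff_distrib)
  have "degree ?p \<le> nat N"
    by (rule degree_le) (simp add: coeff_p)
  then have "poly ?p 1 = (\<Sum>z\<le>nat N. B $ (nat N - z))"
    by (simp add: poly_one_eq_sum_coeffs coeff_p)
  also have "\<dots> = (\<Sum>j\<le>nat N. B $ j)"
    by (rule sum.reindex_bij_witness[where i="\<lambda>j. nat N - j" and j="\<lambda>j. nat N - j"]) auto
  finally show ?thesis using False by (simp add: partial_sum_def)
qed

lemma xvar_plus_one: "xvar + 1 = fls_shift 1 (fps_to_fls (1 + fps_X))"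
  by (rule fls_eqI) (auto simp: xvar_def)

lemma xvar_plus_one_nonzero: "xvar + 1 \<noteq> 0"
  by (rule fls_nonzeroI[where n=0]) (simp add: xvar_def)

lemma Smap_shift:
  "Smap (fls_shift N (fps_to_fls B)) =
     fls_shift (if partial_sum B N = 0 then N - 1 else N) (fps_to_fls (B * fps_geo))"
proof -
  let ?r = "fls_shift N (fps_to_fls B)"
  have B_eq: "fps_to_fls (B * fps_geo) * fps_to_fls (1 + fps_X) = fps_to_fls B"
    by (simp only: fls_times_fps_to_fls[symmetric] mult.assoc fps_geo_times_one_plus_X mult_1_right)
  have div_cancel: "F * (xvar + 1) / (xvar + 1) = F" for F
    by (rule nonzero_mult_div_cancel_right[OF xvar_plus_one_nonzero])
  have shift_down: "?r = fls_shift (N - 1) (fps_to_fls (B * fps_geo)) * (xvar + 1)"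
    unfolding xvar_plus_one fls_times_both_shifted_simp B_eq by simp
  have shift_same: "xvar * ?r = fls_shift N (fps_to_fls (B * fps_geo)) * (xvar + 1)"
    unfolding xvar_plus_one fls_times_both_shifted_simp B_eq
    by (simp add: xvar_def fls_X_inv_times_conv_shift)
  have "?r / (xvar + 1) = fls_shift (N - 1) (fps_to_fls (B * fps_geo))"
    by (subst shift_down) (rule div_cancel)
  moreover have "xvar * ?r / (xvar + 1) = fls_shift N (fps_to_fls (B * fps_geo))"
    by (simp only: shift_same div_cancel)
  ultimately show ?thesis
    by (simp add: Smap_def poly_polypart_shift_one)
qed

fun Smap_deg :: "bit fps \<Rightarrow> int \<Rightarrow> nat \<Rightarrow> int" where
  "Smap_deg A N 0 = N"
| "Smap_deg A N (Suc k) =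
     (if partial_sum (A * fps_geo ^ k) (Smap_deg A N k) = 0 then Smap_deg A N k - 1
      else Smap_deg A N k)"

lemma Smap_iterate:
  "(Smap ^^ k) (fls_shift N (fps_to_fls A)) = fls_shift (Smap_deg A N k) (fps_to_fls (A * fps_geo ^ k))"
  by (induction k) (simp_all add: Smap_shift mult.assoc power_Suc2 del: power_Suc)

lemma pseq_shift: "pseq (fls_shift N (fps_to_fls A)) k = partial_sum (A * fps_geo ^ k) (Smap_deg A N k)"
  by (simp add: pseq_def Smap_iterate poly_polypart_shift_one)

lemma Smap_deg_bounds: "N - int k \<le> Smap_deg A N k" "Smap_deg A N k \<le> N"
  by (induction k) auto

lemma partial_sum_mult_cong_prefix:
  assumes "\<And>j. j \<le> m \<Longrightarrow> A $ j = A' $ j" "N \<le> int m"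
  shows "partial_sum (A * C) N = partial_sum (A' * C) N"
  unfolding partial_sum_def using assms
  by (auto intro!: sum.cong fps_mult_nth_cong_prefix[where m=m])

lemma pseq_cong_prefix:
  assumes "\<And>j. j \<le> m \<Longrightarrow> A $ j = A' $ j"
  shows "pseq (fls_shift (int m) (fps_to_fls A)) k = pseq (fls_shift (int m) (fps_to_fls A')) k"
proof -
  have "Smap_deg A (int m) k = Smap_deg A' (int m) k"
    by (induction k) (simp_all add: partial_sum_mult_cong_prefix[OF assms Smap_deg_bounds(2)])
  then show ?thesis
    by (simp add: pseq_shift partial_sum_mult_cong_prefix[OF assms Smap_deg_bounds(2)])
qed

lemma fps_geo_mult_vanishing:
  fixes B :: "'a::semiring_1 fps"
  assumes "B $ 0 = 0" and tail: "\<And>j. m < j \<Longrightarrow> j \<le> n \<Longrightarrow> B $ j = 0"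
    and "m \<le> M" "M \<le> n" "(\<Sum>j\<le>M. B $ j) = 0"
    and "i = 0 \<or> m \<le> i \<and> i \<le> n"
  shows "(B * fps_geo) $ i = 0"
proof -
  have sum_eq: "(\<Sum>j\<le>a. B $ j) = (\<Sum>j\<le>m. B $ j)" if "m \<le> a" "a \<le> n" for a
    by (rule sum.mono_neutral_right) (use that tail in auto)
  show ?thesis
    using assms(1,3-) sum_eq[of i] sum_eq[of M] by (auto simp: fps_geo_mult_nth)
qed

lemma Smap_deg_eq_if_pseq_eq:
  assumes "\<And>k. k < n \<Longrightarrow>
      pseq (fls_shift N (fps_to_fls A)) k = pseq (fls_shift N (fps_to_fls A')) k"
  shows "k \<le> n \<Longrightarrow> Smap_deg A N k = Smap_deg A' N k"
proof (induction k)
  case (Suc k)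
  then show ?case using assms[of k] by (simp add: pseq_shift)
qed simp

text \<open>Equal digits \<open>p\<^sub>k\<close> say that a partial sum of \<open>(A - A') * fps_geo ^ k\<close> up to an
  index in \<open>[n - k, n]\<close> vanishes; multiplying by \<open>fps_geo\<close> forms partial sums and so
  spreads the vanishing from \<open>(n - k, n]\<close> to \<open>[n - k, n]\<close>.\<close>

lemma pseq_eq_imp_vanishing:
  fixes A A' :: "bit fps"
  assumes "A $ 0 = A' $ 0"
    and pseq_eq: "\<And>k. k < n \<Longrightarrow>
      pseq (fls_shift (int n) (fps_to_fls A)) k = pseq (fls_shift (int n) (fps_to_fls A')) k"
  shows "k \<le> n \<Longrightarrow> j = 0 \<or> n - k < j \<and> j \<le> n \<Longrightarrow> ((A - A') * fps_geo ^ k) $ j = 0"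
proof (induction k arbitrary: j)
  case 0
  then show ?case using assms(1) by auto
next
  case (Suc k)
  let ?D = "(A - A') * fps_geo ^ k"
  define M where "M = nat (Smap_deg A n k)"
  have "n - k \<le> M" "M \<le> n" and M: "Smap_deg A n k = int M"
    using Smap_deg_bounds[where N="int n" and k=k and A=A] Suc.prems(1) by (auto simp: M_def)
  moreover have "(\<Sum>j\<le>M. ?D $ j) = 0"
  proof -
    have "Smap_deg A' n k = int M"
      using Smap_deg_eq_if_pseq_eq[OF pseq_eq, of k] Suc.prems(1) M by simp
    then have "(\<Sum>j\<le>M. (A * fps_geo ^ k) $ j) = (\<Sum>j\<le>M. (A' * fps_geo ^ k) $ j)"
      using pseq_eq[of k] Suc.prems(1) by (simp only: pseq_shift M partial_sum_of_nat Suc_le_eq)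
    then show ?thesis
      by (simp only: left_diff_distrib fps_sub_nth sum_subtractf diff_self)
  qed
  moreover have vanish_k: "?D $ j' = 0" if "j' = 0 \<or> n - k < j' \<and> j' \<le> n" for j'
    using Suc.IH Suc.prems(1) that by simp
  ultimately have "(?D * fps_geo) $ j = 0"
    using Suc.prems by (intro fps_geo_mult_vanishing[OF vanish_k[of 0]]) auto
  then show ?case by (simp only: power_Suc2 mult.assoc)
qed

lemma pseq_determines_prefix:
  fixes A A' :: "bit fps"
  assumes "A $ 0 = A' $ 0"
    and "\<And>k. k < n \<Longrightarrow>
      pseq (fls_shift (int n) (fps_to_fls A)) k = pseq (fls_shift (int n) (fps_to_fls A')) k"
    and "i \<le> n"
  shows "A $ i = A' $ i"
proof -
  define D where "D = A - A'"
  have "fps_cutoff (Suc n) (D * fps_geo ^ n) = 0"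
  proof (rule fps_ext)
    fix j
    show "fps_cutoff (Suc n) (D * fps_geo ^ n) $ j = 0 $ j"
      using pseq_eq_imp_vanishing[OF assms(1,2), of n j]
      by (cases "j = 0") (simp_all add: D_def del: mult_nth_0)
  qed
  moreover have "D = D * fps_geo ^ n * (1 + fps_X) ^ n"
    by (simp add: mult.assoc power_mult_distrib[symmetric] fps_geo_times_one_plus_X)
  ultimately have "D $ i = 0"
    using \<open>i \<le> n\<close> by (metis fps_cutoff_left_mult_nth le_imp_less_Suc mult_zero_left fps_zero_nth)
  then show ?thesis by (simp only: D_def fps_sub_nth right_minus_eq)
qed

definition coin_fps :: "(nat \<Rightarrow> bit) \<Rightarrow> bit fps" where
  "coin_fps \<omega> = Abs_fps (\<lambda>i. if i = 0 then 1 else \<omega> (i - 1))"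

lemma series_of_eq_shift: "series_of n \<omega> = fls_shift (int n) (fps_to_fls (coin_fps \<omega>))"
  by (simp add: series_of_def coin_fps_def)

lemma series_of_in_Q: "series_of n \<omega> \<in> Q n"
proof -
  have "coin_fps \<omega> $ 0 = 1" by (simp add: coin_fps_def)
  then have "coin_fps \<omega> \<noteq> 0" "subdegree (coin_fps \<omega>) = 0"
    by (auto simp: subdegree_eq_0_iff)
  then show ?thesis
    by (simp add: Q_def deg_def series_of_eq_shift fls_shift_eq0_iff fls_subdegree_fls_to_fps)
qed

definition bitvecs :: "nat \<Rightarrow> (nat \<Rightarrow> bit) set" where
  "bitvecs n = PiE {..<n} (\<lambda>_. UNIV)"

definition pdigits :: "nat \<Rightarrow> (nat \<Rightarrow> bit) \<Rightarrow> (nat \<Rightarrow> bit)" where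
  "pdigits n \<omega> = restrict (\<lambda>k. pseq (series_of n \<omega>) k) {..<n}"

lemma pdigits_restrict: "pdigits n (restrict \<omega> {..<n}) = pdigits n \<omega>"
proof -
  have "pseq (series_of n (restrict \<omega> {..<n})) k = pseq (series_of n \<omega>) k" for k
    unfolding series_of_eq_shift
    by (rule pseq_cong_prefix) (auto simp: coin_fps_def)
  then show ?thesis by (simp add: pdigits_def)
qed

lemma inj_on_pdigits: "inj_on (pdigits n) (bitvecs n)"
proof (rule inj_onI)
  fix v v' assume v: "v \<in> bitvecs n" and v': "v' \<in> bitvecs n" and eq: "pdigits n v = pdigits n v'"
  have "coin_fps v $ Suc j = coin_fps v' $ Suc j" if "j < n" for j
  proof (rule pseq_determines_prefix)
    show "pseq (fls_shift (int n) (fps_to_fls (coin_fps v))) k =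
          pseq (fls_shift (int n) (fps_to_fls (coin_fps v'))) k" if "k < n" for k
      using fun_cong[OF eq, of k] that by (simp add: pdigits_def series_of_eq_shift)
  qed (use that in \<open>simp_all add: coin_fps_def\<close>)
  then show "v = v'"
    using v v' by (intro PiE_ext[of _ "{..<n}" "\<lambda>_. UNIV"]) (auto simp: bitvecs_def coin_fps_def)
qed

lemma UNIV_bit: "(UNIV :: bit set) = {0, 1}"
  using bit_not_zero_iff by blast

lemma finite_bitvecs: "finite (bitvecs n)"
  unfolding bitvecs_def by (intro finite_PiE) (simp_all add: UNIV_bit)

lemma bij_betw_pdigits: "bij_betw (pdigits n) (bitvecs n) (bitvecs n)"
proof -
  have "pdigits n ` bitvecs n \<subseteq> bitvecs n"
    by (auto simp: pdigits_def bitvecs_def)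
  then show ?thesis
    using finite_bitvecs inj_on_pdigits by (simp add: bij_betw_def endo_inj_surj)
qed

definition ones :: "nat \<Rightarrow> (nat \<Rightarrow> bit) \<Rightarrow> nat set" where
  "ones n u = {i \<in> {..<n}. u i = 1}"

lemma bij_betw_ones: "bij_betw (ones n) (bitvecs n) (Pow {..<n})"
proof (rule bij_betw_byWitness[where f'="\<lambda>T. restrict (\<lambda>i. of_bool (i \<in> T)) {..<n}"])
  show "\<forall>u\<in>bitvecs n. restrict (\<lambda>i. of_bool (i \<in> ones n u)) {..<n} = u"
    by (auto simp: bitvecs_def ones_def PiE_def extensional_def)
  show "(\<lambda>T. restrict (\<lambda>i. of_bool (i \<in> T)) {..<n}) ` Pow {..<n} \<subseteq> bitvecs n"
    unfolding bitvecs_def by (intro image_subsetI restrict_PiE_iff[THEN iffD2]) simp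
qed (auto simp: ones_def)

lemma card_ones: "card (ones n u) = (\<Sum>i<n. if u i = 1 then 1 else 0)"
proof -
  have "card (ones n u) = (\<Sum>i\<in>ones n u. 1)"
    by simp
  also have "\<dots> = (\<Sum>i<n. if u i = 1 then 1 else 0)"
    unfolding ones_def by (rule sum.inter_filter) simp
  finally show ?thesis .
qed

lemma psum_series_of: "psum (series_of n \<omega>) n = card (ones n (pdigits n \<omega>))"
  by (simp add: card_ones psum_def pdigits_def)

abbreviation coin :: "bit measure" where
  "coin \<equiv> measure_pmf (pmf_of_set {0, 1})"

interpretation coins: product_prob_space "\<lambda>_::nat. coin" UNIV
  by (rule product_prob_spaceI) (rule prob_space_measure_pmf)

lemma pmf_coin: "pmf (pmf_of_set {0, 1}) (b :: bit) = 1/2"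
proof -
  have "b \<in> {0, 1}" using UNIV_bit by blast
  then show ?thesis by simp
qed

lemma emeasure_PiM_coin_singleton:
  assumes "v \<in> bitvecs n"
  shows "{v} \<in> sets (PiM {..<n} (\<lambda>_. coin))"
    and "emeasure (PiM {..<n} (\<lambda>_. coin)) {v} = ennreal ((1/2) ^ n)"
proof -
  have v_eq: "{v} = PiE {..<n} (\<lambda>i. {v i})"
    using assms by (simp add: bitvecs_def PiE_singleton PiE_iff)
  show "{v} \<in> sets (PiM {..<n} (\<lambda>_. coin))"
    unfolding v_eq by (rule sets_PiM_I_finite) auto
  have "emeasure (PiM {..<n} (\<lambda>_. coin)) {v} = (\<Prod>i<n. emeasure coin {v i})"
    unfolding v_eq by (rule coins.emeasure_PiM) auto
  also have "\<dots> = (\<Prod>i<n. ennreal (1/2))"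
    by (simp only: emeasure_pmf_single pmf_coin)
  also have "\<dots> = ennreal (1/2) ^ n"
    by (simp only: prod_constant card_lessThan)
  also have "\<dots> = ennreal ((1/2) ^ n)"
    by (rule ennreal_power) simp
  finally show "emeasure (PiM {..<n} (\<lambda>_. coin)) {v} = ennreal ((1/2) ^ n)" .
qed

lemma emeasure_PiM_coin:
  assumes "B \<subseteq> bitvecs n"
  shows "B \<in> sets (PiM {..<n} (\<lambda>_. coin))"
    and "emeasure (PiM {..<n} (\<lambda>_. coin)) B = ennreal (card B / 2 ^ n)"
proof -
  have "finite B"
    using assms finite_bitvecs finite_subset by blast
  have "B = (\<Union>v\<in>B. {v})" by blast
  also have "\<dots> \<in> sets (PiM {..<n} (\<lambda>_. coin))"
    using \<open>finite B\<close> assms emeasure_PiM_coin_singleton(1) by (intro sets.finite_UN) auto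
  finally show "B \<in> sets (PiM {..<n} (\<lambda>_. coin))" .
  then have "emeasure (PiM {..<n} (\<lambda>_. coin)) B = (\<Sum>v\<in>B. emeasure (PiM {..<n} (\<lambda>_. coin)) {v})"
    using \<open>finite B\<close> assms emeasure_PiM_coin_singleton(1)
    by (intro emeasure_eq_sum_singleton) auto
  also have "\<dots> = (\<Sum>v\<in>B. ennreal ((1/2) ^ n))"
    using assms emeasure_PiM_coin_singleton(2) by (intro sum.cong) auto
  also have "\<dots> = ennreal (\<Sum>v\<in>B. (1/2) ^ n)"
    by (rule sum_ennreal) simp
  also have "\<dots> = ennreal (card B / 2 ^ n)"
    by (simp add: power_divide)
  finally show "emeasure (PiM {..<n} (\<lambda>_. coin)) B = ennreal (card B / 2 ^ n)" .
qed

lemma measure_coin_space_cylinder: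
  assumes "B \<subseteq> bitvecs n"
  shows "prod_emb UNIV (\<lambda>_. coin) {..<n} B \<in> sets coin_space"
    and "measure coin_space (prod_emb UNIV (\<lambda>_. coin) {..<n} B) = card B / 2 ^ n"
proof -
  show "prod_emb UNIV (\<lambda>_. coin) {..<n} B \<in> sets coin_space"
    unfolding coin_space_def using emeasure_PiM_coin(1)[OF assms]
    by (intro measurable_prod_emb) auto
  have "emeasure coin_space (prod_emb UNIV (\<lambda>_. coin) {..<n} B) = ennreal (card B / 2 ^ n)"
    unfolding coin_space_def using emeasure_PiM_coin[OF assms]
    by (subst coins.emeasure_PiM_emb') auto
  then show "measure coin_space (prod_emb UNIV (\<lambda>_. coin) {..<n} B) = card B / 2 ^ n"
    by (simp add: measure_def)
qed

lemma mu_event_psum_eq_cylinder: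
  "mu_event n {r \<in> Q n. P (psum r n)} =
     prod_emb UNIV (\<lambda>_. coin) {..<n} {v \<in> bitvecs n. P (card (ones n (pdigits n v)))}"
proof -
  have "restrict \<omega> {..<n} \<in> bitvecs n" for \<omega>
    by (simp add: bitvecs_def)
  then show ?thesis
    unfolding mu_event_def prod_emb_def coin_space_def
    using series_of_in_Q psum_series_of pdigits_restrict by (auto simp: space_PiM)
qed

lemma card_filter_bij_betw:
  assumes "bij_betw f A B"
  shows "card {a \<in> A. P (f a)} = card {b \<in> B. P b}"
proof (rule bij_betw_same_card, rule bij_betw_subset[OF assms])
  show "f ` {a \<in> A. P (f a)} = {b \<in> B. P b}"
    using assms by (auto simp: bij_betw_def)
qed auto

lemma prob_binomial_half:
  "measure_pmf.prob (binomial_pmf n (1/2)) {x. P x} = card {T \<in> Pow {..<n}. P (card T)} / 2 ^ n"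
proof -
  have "binomial_pmf n (1/2) =
      map_pmf card (map_pmf (\<lambda>b. {x \<in> {..<n}. b x}) (Pi_pmf {..<n} False (\<lambda>_. bernoulli_pmf (1/2))))"
    by (subst binomial_pmf_altdef'[where A="{..<n}"]) (simp_all add: map_pmf_comp)
  also have "\<dots> = map_pmf card (pmf_of_set (Pow {..<n}))"
    by (simp only: pmf_of_set_Pow_conv_bernoulli[OF finite_lessThan])
  finally have "measure_pmf.prob (binomial_pmf n (1/2)) {x. P x} =
      measure_pmf.prob (pmf_of_set (Pow {..<n})) {T. P (card T)}"
    by simp
  also have "\<dots> = card {T \<in> Pow {..<n}. P (card T)} / 2 ^ n"
    by (subst measure_pmf_of_set) (auto simp: card_Pow Int_def conj_commute)
  finally show ?thesis .
qed

lemma mu_event_psum: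
  "mu_event n {r \<in> Q n. P (psum r n)} \<in> sets coin_space"
  "measure coin_space (mu_event n {r \<in> Q n. P (psum r n)}) =
     measure_pmf.prob (binomial_pmf n (1/2)) {x. P x}"
proof -
  let ?C = "{v \<in> bitvecs n. P (card (ones n (pdigits n v)))}"
  have "bij_betw (\<lambda>v. ones n (pdigits n v)) (bitvecs n) (Pow {..<n})"
    using bij_betw_trans[OF bij_betw_pdigits bij_betw_ones] by (simp add: comp_def)
  then have "card ?C = card {T \<in> Pow {..<n}. P (card T)}"
    by (rule card_filter_bij_betw)
  then show "mu_event n {r \<in> Q n. P (psum r n)} \<in> sets coin_space"
    "measure coin_space (mu_event n {r \<in> Q n. P (psum r n)}) =
       measure_pmf.prob (binomial_pmf n (1/2)) {x. P x}"
    unfolding mu_event_psum_eq_cylinder prob_binomial_half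
    using measure_coin_space_cylinder[of ?C n] by auto
qed

lemma binomial_tail_bounds:
  fixes p \<epsilon> :: real
  assumes "p \<in> {0..1}" "\<epsilon> \<ge> 0"
  shows "measure_pmf.prob (binomial_pmf n p) {x. real x \<ge> real n * (p + \<epsilon>)} \<le> exp (- 2 * \<epsilon>^2 * real n)"
    and "measure_pmf.prob (binomial_pmf n p) {x. real x \<le> real n * (p - \<epsilon>)} \<le> exp (- 2 * \<epsilon>^2 * real n)"
proof -
  have "measure_pmf.prob (binomial_pmf n p) {x. real x \<ge> real n * (p + \<epsilon>)} \<le> exp (- 2 * \<epsilon>^2 * real n) \<and>
      measure_pmf.prob (binomial_pmf n p) {x. real x \<le> real n * (p - \<epsilon>)} \<le> exp (- 2 * \<epsilon>^2 * real n)"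
  proof (cases "n = 0")
    case True
    then show ?thesis by simp
  next
    case False
    then have "{x. real x \<ge> real n * (p + \<epsilon>)} = {x. real x / n \<ge> p + \<epsilon>}"
      and "{x. real x \<le> real n * (p - \<epsilon>)} = {x. real x / n \<le> p - \<epsilon>}"
      by (auto simp: field_simps)
    moreover have "binomial_distribution p"
      using assms(1) by unfold_locales
    ultimately show ?thesis
      using binomial_distribution.prob_ge' binomial_distribution.prob_le' False assms(2)
      by (simp add: mult.commute mult.left_commute)
  qed
  then show "measure_pmf.prob (binomial_pmf n p) {x. real x \<ge> real n * (p + \<epsilon>)} \<le> exp (- 2 * \<epsilon>^2 * real n)"
    and "measure_pmf.prob (binomial_pmf n p) {x. real x \<le> real n * (p - \<epsilon>)} \<le> exp (- 2 * \<epsilon>^2 * real n)"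
    by auto
qed

theorem lemma2p11:
  fixes \<epsilon> :: real and n :: nat
  assumes "\<epsilon> > 0"
  shows "mu_event n {r \<in> Q n. real (psum r n) \<ge> real n * (1/2 + \<epsilon>)} \<in> sets coin_space
       \<and> measure coin_space (mu_event n {r \<in> Q n. real (psum r n) \<ge> real n * (1/2 + \<epsilon>)})
           \<le> exp (- 2 * \<epsilon>^2 * real n)
       \<and> mu_event n {r \<in> Q n. real (psum r n) \<le> real n * (1/2 - \<epsilon>)} \<in> sets coin_space
       \<and> measure coin_space (mu_event n {r \<in> Q n. real (psum r n) \<le> real n * (1/2 - \<epsilon>)})
           \<le> exp (- 2 * \<epsilon>^2 * real n)"
  using mu_event_psum[where P="\<lambda>x. real x \<ge> real n * (1/2 + \<epsilon>)"]
    mu_event_psum[where P="\<lambda>x. real x \<le> real n * (1/2 - \<epsilon>)"]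
    binomial_tail_bounds[of "1/2" \<epsilon> n] assms
  by simp

end
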